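(* Let $\{\rho_n\}_{n\ge0},\{\beta_n\}_{n\ge0},\{\tau_n\}_{n\ge0}$ be real sequences with $\rho_n\ne0$, $\tau_n\neq0$ and $-2<\tau_n\rho_n^{-1}<0$ for $n\ge0$, $\beta_0\neq0,\pm1$, $\beta_n\neq0$ for $n\ge1$, and $\tau_1\rho_1^{-1}=\rho_0\beta_0^{-1}(\beta_0^2-1)$. Let $\mathcal{P}_0(\lambda)=1$, $\mathcal{P}_1(\lambda)=\rho_0(\lambda-\beta_0)$, $\mathcal{P}_{n+1}(\lambda)=\rho_n(\lambda-\beta_n)\mathcal{P}_n(\lambda)+\tau_n\lambda\,\mathcal{P}_{n-1}(\lambda)$, $n\ge1$. Let $\{\alpha_n\}_{n\ge0}$ be nonzero reals with $\alpha_0=\tau_0\rho_0^{-1}$, $\alpha_1=\rho_0(\beta_0-1)$, and for $n\ge2$ $$\alpha_n=-(\rho_{n-1}-\alpha_{n-1}^{-1}\tau_{n-1})+\rho_{n-1}\beta_{n-1},$$ and suppose in addition that for $n\ge2$ $$\alpha_n\rho_n=(2\rho_n+\tau_n)(\rho_{n-1}\alpha_{n-1}-\tau_{n-1})+\tau_n,\qquad \alpha_n\rho_n=-\rho_{n-1}\beta_{n-1}(2\rho_n+\tau_n)\alpha_{n-1}.$$ With $p_n=\alpha_{n-1}\rho_{n-1}-\tau_{n-1}$, $q_n=\alpha_{n-1}(\alpha_n-\rho_{n-1}\beta_{n-1})$, assume $p_{n+1}\neq0$, $q_n\ne0$ for $n\ge1$. Put $\mathcal{Q}_n(\lambda)=\mathcal{P}_n(\lambda)+\alpha_n\mathcal{P}_{n-1}(\lambda)$,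 $n\ge1$, let $\kappa_n=\rho_0\rho_1\cdots\rho_n$ (the leading coefficient of $\mathcal{Q}_{n+1}$), and define $\mathcal{R}_n(\lambda)=\kappa_n^{-1}(\lambda-1)^{-1}\mathcal{Q}_{n+1}(\lambda)$, $n\ge0$. Then $\{\mathcal{R}_n(\lambda)\}_{n\ge1}$ is a sequence of para-orthogonal polynomials.
   Context: A sequence $\{\mathcal{R}_n\}_{n\ge1}$ of polynomials with $\deg\mathcal{R}_n=n$ is called para-orthogonal (in the sense of Jones, Njåstad and Thron) if there exists a nontrivial probability measure $\mu$ on the unit circle, with monic orthogonal polynomials $\phi_n$, such that for each $n\ge1$, $\mathcal{R}_n(\lambda)=c_n\big(\phi_n(\lambda)+\omega_n\phi_n^*(\lambda)\big)$ for some $c_n\neq0$ and $|\omega_n|=1$, where $\phi_n^*(\lambda)=\lambda^n\overline{\phi_n(1/\bar\lambda)}$. (Under the hypotheses, $\mathcal{Q}_{n+1}(1)=0$, so $\mathcal{R}_n$ is a monic polynomial of degree $n$.) *)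

theory Defs
  imports "HOL-Probability.Probability" "HOL-Computational_Algebra.Polynomial"
begin

text \<open>Reversed polynomial phi^*(z) = z^n conj(phi(1/conj z)) for a polynomial of degree n:
  conjugate the coefficients and reverse their order.\<close>
definition reversed_poly :: "complex poly \<Rightarrow> complex poly" where
  "reversed_poly p = reflect_poly (map_poly cnj p)"

definition nontrivial_circle_prob :: "complex measure \<Rightarrow> bool" where
  "nontrivial_circle_prob \<mu> \<longleftrightarrow>
     prob_space \<mu> \<and> sets \<mu> = sets borel \<and> (AE z in \<mu>. cmod z = 1) \<and>
     (\<forall>F. finite F \<longrightarrow> measure \<mu> (UNIV - F) > 0)"

definition monic_OPUC :: "complex measure \<Rightarrow> (nat \<Rightarrow> complex poly) \<Rightarrow> bool" where
  "monic_OPUC \<mu> \<phi> \<longleftrightarrow>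
     (\<forall>n. degree (\<phi> n) = n \<and> lead_coeff (\<phi> n) = 1 \<and>
          (\<forall>k<n. integral\<^sup>L \<mu> (\<lambda>z. poly (\<phi> n) z * cnj (z ^ k)) = 0))"

definition para_orthogonal :: "(nat \<Rightarrow> complex poly) \<Rightarrow> bool" where
  "para_orthogonal R \<longleftrightarrow>
     (\<forall>n\<ge>1. degree (R n) = n) \<and>
     (\<exists>\<mu> \<phi>. nontrivial_circle_prob \<mu> \<and> monic_OPUC \<mu> \<phi> \<and>
        (\<forall>n\<ge>1. \<exists>c \<omega>. c \<noteq> 0 \<and> cmod \<omega> = 1 \<and>
             R n = smult c (\<phi> n + smult \<omega> (reversed_poly (\<phi> n)))))"

fun Ppoly :: "(nat \<Rightarrow> real) \<Rightarrow> (nat \<Rightarrow> real) \<Rightarrow> (nat \<Rightarrow> real) \<Rightarrow> nat \<Rightarrow> real poly" where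
  "Ppoly \<rho> \<beta> \<tau> 0 = 1"
| "Ppoly \<rho> \<beta> \<tau> (Suc 0) = smult (\<rho> 0) [:- \<beta> 0, 1:]"
| "Ppoly \<rho> \<beta> \<tau> (Suc (Suc n)) =
     smult (\<rho> (Suc n)) ([:- \<beta> (Suc n), 1:] * Ppoly \<rho> \<beta> \<tau> (Suc n))
     + smult (\<tau> (Suc n)) ([:0, 1:] * Ppoly \<rho> \<beta> \<tau> n)"

definition Qpoly :: "(nat \<Rightarrow> real) \<Rightarrow> (nat \<Rightarrow> real) \<Rightarrow> (nat \<Rightarrow> real) \<Rightarrow> (nat \<Rightarrow> real) \<Rightarrow> nat \<Rightarrow> real poly" where
  "Qpoly \<rho> \<beta> \<tau> \<alpha> n = Ppoly \<rho> \<beta> \<tau> n + smult (\<alpha> n) (Ppoly \<rho> \<beta> \<tau> (n - 1))"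

definition Rpoly :: "(nat \<Rightarrow> real) \<Rightarrow> (nat \<Rightarrow> real) \<Rightarrow> (nat \<Rightarrow> real) \<Rightarrow> (nat \<Rightarrow> real) \<Rightarrow> nat \<Rightarrow> real poly" where
  "Rpoly \<rho> \<beta> \<tau> \<alpha> n =
     smult (inverse (\<Prod>i\<le>n. \<rho> i)) (Qpoly \<rho> \<beta> \<tau> \<alpha> (Suc n) div [:-1, 1:])"

end

theory Submission
  imports Defs
begin

(* Write t_n = tau_n / rho_n.  Eliminating the P_n from the recurrence gives
   Q_{n+1} = kappa_n (z - 1) T_n, where T_0 = 1, T_1 = z + 1 and
   T_{n+1} = (z + 1) T_n - g_n z T_{n-1} with g_n = -t_n (2 + t_{n+1}); so R_n = T_n.
   Because -2 < t_n < 0, g_n/4 is a positive chain sequence: a_0 = -1,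
   a_{n+1} = g_{n+1} / (1 - a_n) - 1 stays in (-1, 1), and with v_n = a_{n+1} one gets
   T_n = (1 - a_n)^{-1} (phi_n + phi^*_n) for the Szego polynomials phi_n of the real
   Verblunsky coefficients v_n.  The measure comes from Verblunsky's theorem: the moments
   determined by phi_n being orthogonal to 1 make all phi_n orthogonal with
   ||phi_n||^2 = prod_{k<n} (1 - v_k^2) > 0, so their Toeplitz form is positive definite;
   as in Herglotz's theorem a weak limit (Helly) of the Fejer densities has these moments,
   and positive definiteness rules out finite support. *)

section \<open>Szego polynomials with real Verblunsky coefficients\<close>

lemma poly_eqI_nonzero:
  fixes p q :: "'a::{field, ring_char_0} poly"
  assumes "\<And>x. x \<noteq> 0 \<Longrightarrow> poly p x = poly q x"
  shows "p = q"
proof (rule ccontr)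
  assume "p \<noteq> q"
  hence "finite {x. poly (p - q) x = 0}" by (intro poly_roots_finite) simp
  moreover have "UNIV - {0} \<subseteq> {x. poly (p - q) x = 0}" using assms by auto
  ultimately have "finite (UNIV - {0::'a})" by (rule finite_subset[rotated])
  thus False by (simp add: infinite_UNIV_char_0)
qed

text \<open>The pair \<open>(\<phi>\<^sub>n, \<phi>\<^sub>n\<^sup>*)\<close> of the Szego recursion; for real coefficients no
  conjugation occurs.\<close>
fun szego_pair :: "(nat \<Rightarrow> real) \<Rightarrow> nat \<Rightarrow> real poly \<times> real poly" where
  "szego_pair v 0 = (1, 1)"
| "szego_pair v (Suc n) =
     (pCons 0 (fst (szego_pair v n)) - smult (v n) (snd (szego_pair v n)),
      snd (szego_pair v n) - smult (v n) (pCons 0 (fst (szego_pair v n))))"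

definition szego_poly :: "(nat \<Rightarrow> real) \<Rightarrow> nat \<Rightarrow> real poly" where
  "szego_poly v n = fst (szego_pair v n)"

definition szego_rev :: "(nat \<Rightarrow> real) \<Rightarrow> nat \<Rightarrow> real poly" where
  "szego_rev v n = snd (szego_pair v n)"

lemma szego_poly_0 [simp]: "szego_poly v 0 = 1"
  and szego_rev_0 [simp]: "szego_rev v 0 = 1"
  by (simp_all add: szego_poly_def szego_rev_def)

lemma szego_poly_Suc: "szego_poly v (Suc n) = pCons 0 (szego_poly v n) - smult (v n) (szego_rev v n)"
  and szego_rev_Suc: "szego_rev v (Suc n) = szego_rev v n - smult (v n) (pCons 0 (szego_poly v n))"
  by (simp_all add: szego_poly_def szego_rev_def)

lemma szego_degrees:
  "degree (szego_poly v n) = n \<and> coeff (szego_poly v n) n = 1 \<and> degree (szego_rev v n) \<le> n"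
proof (induction n)
  case 0
  then show ?case by simp
next
  case (Suc n)
  have shift: "degree (pCons 0 (szego_poly v n)) = Suc n"
    using Suc by (cases "szego_poly v n = 0") auto
  have rev: "degree (smult (v n) (szego_rev v n)) \<le> n"
    using Suc by (meson degree_smult_le order_trans)
  have lead: "coeff (szego_poly v (Suc n)) (Suc n) = 1"
    using Suc rev by (simp add: szego_poly_Suc coeff_eq_0)
  have "degree (szego_poly v (Suc n)) \<le> Suc n"
    unfolding szego_poly_Suc using shift rev by (intro degree_diff_le) auto
  with lead have "degree (szego_poly v (Suc n)) = Suc n"
    by (metis le_degree le_antisym zero_neq_one)
  moreover have "degree (szego_rev v (Suc n)) \<le> Suc n"
    unfolding szego_rev_Suc using shift Suc
    by (intro degree_diff_le) (auto intro: order_trans[OF degree_smult_le])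
  ultimately show ?case using lead by simp
qed

lemma degree_szego_poly [simp]: "degree (szego_poly v n) = n"
  and coeff_szego_poly_self [simp]: "coeff (szego_poly v n) n = 1"
  and degree_szego_rev_le: "degree (szego_rev v n) \<le> n"
  using szego_degrees[of v n] by auto

lemma szego_poly_nonzero [simp]: "szego_poly v n \<noteq> 0"
  using coeff_szego_poly_self[of v n] by (metis coeff_0 zero_neq_one)

lemma poly_szego_rev: "x \<noteq> 0 \<Longrightarrow> poly (szego_rev v n) x = x ^ n * poly (szego_poly v n) (inverse x)"
proof (induction n arbitrary: x)
  case 0
  then show ?case by simp
next
  case (Suc n)
  have "poly (szego_rev v n) (inverse x) = inverse x ^ n * poly (szego_poly v n) x"
    using Suc.IH[of "inverse x"] Suc.prems by simp
  hence "poly (szego_poly v n) x = x ^ n * poly (szego_rev v n) (inverse x)"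
    using Suc.prems by (simp add: field_simps)
  with Suc show ?case by (simp add: szego_poly_Suc szego_rev_Suc field_simps)
qed

lemma szego_rev_eq_reflect: "szego_rev v n = reflect_poly (szego_poly v n)"
  by (rule poly_eqI_nonzero) (simp add: poly_szego_rev poly_reflect_poly_nz)

section \<open>Toeplitz forms\<close>

text \<open>With \<open>c m\<close> read as the moment \<open>\<integral> z\<^sup>m d\<mu>\<close>, this is \<open>\<integral> p(z) conj(z\<^sup>k) d\<mu>\<close>.\<close>
definition toeplitz_functional :: "(int \<Rightarrow> real) \<Rightarrow> real poly \<Rightarrow> nat \<Rightarrow> real" where
  "toeplitz_functional c p k = (\<Sum>j\<le>degree p. coeff p j * c (int j - int k))"

lemma toeplitz_functional_eq_sum:
  "degree p < K \<Longrightarrow> toeplitz_functional c p k = (\<Sum>j<K. coeff p j * c (int j - int k))"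
  unfolding toeplitz_functional_def by (rule sum.mono_neutral_left) (auto simp: coeff_eq_0)

lemma toeplitz_functional_add:
  "toeplitz_functional c (p + q) k = toeplitz_functional c p k + toeplitz_functional c q k"
proof -
  define K where "K = Suc (max (degree p) (degree q))"
  have "degree (p + q) < K" "degree p < K" "degree q < K"
    using degree_add_le_max[of p q] by (auto simp: K_def)
  thus ?thesis by (simp add: toeplitz_functional_eq_sum sum.distrib algebra_simps)
qed

lemma toeplitz_functional_smult:
  "toeplitz_functional c (smult a p) k = a * toeplitz_functional c p k"
proof -
  have "degree (smult a p) < Suc (degree p)" "degree p < Suc (degree p)"
    using degree_smult_le[of a p] by auto
  thus ?thesis
    by (simp only: toeplitz_functional_eq_sum coeff_smult sum_distrib_left mult.assoc)
qed

lemma toeplitz_functional_diff: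
  "toeplitz_functional c (p - q) k = toeplitz_functional c p k - toeplitz_functional c q k"
  using toeplitz_functional_add[of c p "smult (-1) q" k] toeplitz_functional_smult[of c "-1" q k]
  by simp

lemma toeplitz_functional_pCons_0:
  "toeplitz_functional c (pCons 0 p) (Suc k) = toeplitz_functional c p k"
proof -
  have "degree (pCons 0 p) < Suc (Suc (degree p))" by (cases "p = 0") auto
  hence "toeplitz_functional c (pCons 0 p) (Suc k)
      = (\<Sum>j<Suc (Suc (degree p)). coeff (pCons 0 p) j * c (int j - int (Suc k)))"
    by (rule toeplitz_functional_eq_sum)
  also have "\<dots> = (\<Sum>j<Suc (degree p). coeff p j * c (int j - int k))"
    by (subst sum.lessThan_Suc_shift) simp
  also have "\<dots> = toeplitz_functional c p k" by (rule toeplitz_functional_eq_sum[symmetric]) simp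
  finally show ?thesis .
qed

lemma toeplitz_functional_reflect:
  assumes c: "\<And>m. c (- m) = c m" and "degree p = n" "k \<le> n"
  shows "toeplitz_functional c (reflect_poly p) (n - k) = toeplitz_functional c p k"
proof -
  have "degree (reflect_poly p) < Suc n" using degree_reflect_poly_le[of p] assms by simp
  hence "toeplitz_functional c (reflect_poly p) (n - k)
      = (\<Sum>j<Suc n. coeff p (n - j) * c (int j - int (n - k)))"
    using assms by (simp add: toeplitz_functional_eq_sum coeff_reflect_poly)
  also have "\<dots> = (\<Sum>j<Suc n. (\<lambda>i. coeff p i * c (int i - int k)) (n - j))"
  proof (intro sum.cong refl)
    fix j assume "j \<in> {..<Suc n}"
    hence "int j - int (n - k) = - (int (n - j) - int k)" using assms by auto
    thus "coeff p (n - j) * c (int j - int (n - k)) = (\<lambda>i. coeff p i * c (int i - int k)) (n - j)"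
      by (simp only: c)
  qed
  also have "\<dots> = (\<Sum>i<Suc n. coeff p i * c (int i - int k))"
    using sum.nat_diff_reindex[of "\<lambda>i. coeff p i * c (int i - int k)" "Suc n"] by simp
  also have "\<dots> = toeplitz_functional c p k"
    by (rule toeplitz_functional_eq_sum[symmetric]) (simp add: assms)
  finally show ?thesis .
qed

definition toeplitz_inner :: "(int \<Rightarrow> real) \<Rightarrow> real poly \<Rightarrow> real poly \<Rightarrow> real" where
  "toeplitz_inner c p q = (\<Sum>l\<le>degree q. coeff q l * toeplitz_functional c p l)"

lemma toeplitz_inner_altdef:
  "toeplitz_inner c p q = (\<Sum>j\<le>degree p. \<Sum>l\<le>degree q. coeff p j * coeff q l * c (int j - int l))"
  unfolding toeplitz_inner_def toeplitz_functional_def sum_distrib_left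
  by (subst sum.swap) (simp add: algebra_simps)

lemma toeplitz_inner_eq_sum:
  assumes "degree p < K" "degree q < K"
  shows "toeplitz_inner c p q = (\<Sum>j<K. \<Sum>l<K. coeff p j * coeff q l * c (int j - int l))"
proof -
  have "toeplitz_inner c p q = (\<Sum>l<K. coeff q l * toeplitz_functional c p l)"
    unfolding toeplitz_inner_def using assms
    by (intro sum.mono_neutral_left) (auto simp: coeff_eq_0)
  also have "\<dots> = (\<Sum>l<K. \<Sum>j<K. coeff p j * coeff q l * c (int j - int l))"
    by (simp only: toeplitz_functional_eq_sum[OF assms(1)] sum_distrib_left mult_ac)
  also have "\<dots> = (\<Sum>j<K. \<Sum>l<K. coeff p j * coeff q l * c (int j - int l))"
    by (rule sum.swap)
  finally show ?thesis .
qed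

lemma toeplitz_inner_add_left:
  "toeplitz_inner c (p + p') q = toeplitz_inner c p q + toeplitz_inner c p' q"
  unfolding toeplitz_inner_def by (simp add: toeplitz_functional_add sum.distrib algebra_simps)

lemma toeplitz_inner_smult_left: "toeplitz_inner c (smult a p) q = a * toeplitz_inner c p q"
  unfolding toeplitz_inner_def by (simp add: toeplitz_functional_smult sum_distrib_left algebra_simps)

lemma toeplitz_inner_monom_right: "toeplitz_inner c p (monom 1 k) = toeplitz_functional c p k"
proof -
  have "toeplitz_inner c p (monom 1 k) = (\<Sum>l\<le>k. if l = k then toeplitz_functional c p l else 0)"
    unfolding toeplitz_inner_def by (intro sum.cong) (auto simp: degree_monom_eq coeff_monom)
  thus ?thesis by simp
qed

lemma toeplitz_inner_commute:
  assumes c: "\<And>m. c (- m) = c m"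
  shows "toeplitz_inner c p q = toeplitz_inner c q p"
proof -
  have "toeplitz_inner c p q
      = (\<Sum>l\<le>degree q. \<Sum>j\<le>degree p. coeff p j * coeff q l * c (int j - int l))"
    unfolding toeplitz_inner_altdef by (rule sum.swap)
  also have "\<dots> = toeplitz_inner c q p"
    unfolding toeplitz_inner_altdef
  proof (intro sum.cong refl)
    fix l j
    show "coeff p j * coeff q l * c (int j - int l) = coeff q l * coeff p j * c (int l - int j)"
      using c[of "int l - int j"] by simp
  qed
  finally show ?thesis .
qed

definition toeplitz_quadratic :: "(int \<Rightarrow> real) \<Rightarrow> nat \<Rightarrow> (nat \<Rightarrow> real) \<Rightarrow> real" where
  "toeplitz_quadratic c N w = (\<Sum>j<N. \<Sum>l<N. w j * w l * c (int j - int l))"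

lemma toeplitz_quadratic_eq_inner:
  "toeplitz_quadratic c N w = toeplitz_inner c (Poly (map w [0..<N])) (Poly (map w [0..<N]))"
proof -
  define p where "p = Poly (map w [0..<N])"
  have coeff_p: "coeff p j = (if j < N then w j else 0)" for j
    by (simp add: p_def nth_default_def)
  have deg: "degree p < Suc N" using degree_Poly[of "map w [0..<N]"] by (simp add: p_def)
  have "toeplitz_inner c p p = (\<Sum>j<Suc N. \<Sum>l<Suc N. coeff p j * coeff p l * c (int j - int l))"
    by (rule toeplitz_inner_eq_sum[OF deg deg])
  also have "\<dots> = (\<Sum>j<N. \<Sum>l<N. coeff p j * coeff p l * c (int j - int l))"
    by (simp add: coeff_p[of N])
  also have "\<dots> = toeplitz_quadratic c N w"
    unfolding toeplitz_quadratic_def by (intro sum.cong refl) (simp add: coeff_p)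
  finally show ?thesis unfolding p_def by (rule sym)
qed

text \<open>The value at \<open>n\<close> makes \<open>\<phi>\<^sub>n\<close> orthogonal to the constants; with the Szego
  recursion this gives all the orthogonality relations.\<close>
fun szego_moment_seq :: "(nat \<Rightarrow> real) \<Rightarrow> nat \<Rightarrow> real" where
  "szego_moment_seq v n =
     (if n = 0 then 1 else - (\<Sum>j<n. coeff (szego_poly v n) j * szego_moment_seq v j))"

declare szego_moment_seq.simps [simp del]

definition szego_moment :: "(nat \<Rightarrow> real) \<Rightarrow> int \<Rightarrow> real" where
  "szego_moment v m = szego_moment_seq v (nat \<bar>m\<bar>)"

lemma szego_moment_uminus [simp]: "szego_moment v (- m) = szego_moment v m"
  by (simp add: szego_moment_def)

lemma szego_moment_0 [simp]: "szego_moment v 0 = 1"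
  by (simp add: szego_moment_def szego_moment_seq.simps)

definition szego_norm :: "(nat \<Rightarrow> real) \<Rightarrow> nat \<Rightarrow> real" where
  "szego_norm v n = (\<Prod>k<n. 1 - (v k)\<^sup>2)"

lemma toeplitz_functional_szego_rev:
  assumes "k \<le> n"
  shows "toeplitz_functional (szego_moment v) (szego_rev v n) k
       = toeplitz_functional (szego_moment v) (szego_poly v n) (n - k)"
  using toeplitz_functional_reflect[of "szego_moment v" "szego_poly v n" n "n - k"] assms
  by (simp add: szego_rev_eq_reflect)

lemma szego_orthogonal:
  "(\<forall>k<n. toeplitz_functional (szego_moment v) (szego_poly v n) k = 0)
   \<and> toeplitz_functional (szego_moment v) (szego_poly v n) n = szego_norm v n"
proof (induction n)
  case 0
  show ?case by (simp add: toeplitz_functional_def szego_norm_def)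
next
  case (Suc n)
  let ?L = "toeplitz_functional (szego_moment v)"
  have orth: "\<And>k. k < n \<Longrightarrow> ?L (szego_poly v n) k = 0"
    and norm: "?L (szego_poly v n) n = szego_norm v n" using Suc by auto
  have at_0: "?L (szego_poly v (Suc n)) 0 = 0"
    by (simp add: toeplitz_functional_def szego_moment_def
        szego_moment_seq.simps[of v "Suc n"] flip: lessThan_Suc_atMost)
  have shifted: "?L (szego_poly v (Suc n)) (Suc k) = 0" if "k < n" for k
    using that orth[of k] orth[of "n - Suc k"]
    by (simp add: szego_poly_Suc toeplitz_functional_diff toeplitz_functional_smult
        toeplitz_functional_pCons_0 toeplitz_functional_szego_rev)
  have rev_0: "?L (szego_rev v n) 0 = szego_norm v n"
    using norm by (simp add: toeplitz_functional_szego_rev)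
  have "?L (szego_rev v n) (Suc n) = ?L (pCons 0 (szego_poly v n)) 0"
    using toeplitz_functional_reflect[of "szego_moment v" "pCons 0 (szego_poly v n)" "Suc n" 0]
    by (simp add: szego_rev_eq_reflect reflect_poly_pCons')
  also have "\<dots> = v n * szego_norm v n"
    using at_0 rev_0 by (simp add: szego_poly_Suc toeplitz_functional_diff toeplitz_functional_smult)
  finally have "?L (szego_poly v (Suc n)) (Suc n) = szego_norm v n - v n * (v n * szego_norm v n)"
    by (simp add: szego_poly_Suc toeplitz_functional_diff toeplitz_functional_smult
        toeplitz_functional_pCons_0 norm)
  also have "\<dots> = szego_norm v (Suc n)" by (simp add: szego_norm_def power2_eq_square algebra_simps)
  finally show ?case using at_0 shifted by (auto simp: less_Suc_eq_0_disj)
qed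

lemma toeplitz_inner_szego_lower:
  "degree q < n \<Longrightarrow> toeplitz_inner (szego_moment v) (szego_poly v n) q = 0"
  unfolding toeplitz_inner_def using szego_orthogonal[of n v] by (intro sum.neutral) auto

lemma toeplitz_inner_szego_top:
  assumes "degree q = n"
  shows "toeplitz_inner (szego_moment v) (szego_poly v n) q = lead_coeff q * szego_norm v n"
  using szego_orthogonal[of n v] assms
  by (simp add: toeplitz_inner_def flip: lessThan_Suc_atMost)

lemma szego_norm_pos: "(\<And>k. \<bar>v k\<bar> < 1) \<Longrightarrow> szego_norm v n > 0"
  unfolding szego_norm_def by (intro prod_pos) (simp add: abs_square_less_1)

text \<open>Split \<open>p\<close> along the monic \<open>\<phi>\<^sub>d\<close> of its degree: the square norm becomes
  \<open>(lead_coeff p)\<^sup>2 \<parallel>\<phi>\<^sub>d\<parallel>\<^sup>2\<close> plus the square norm of a polynomial of lower degree.\<close>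
lemma toeplitz_inner_szego_pos:
  assumes bounded: "\<And>k. \<bar>v k\<bar> < 1" and "p \<noteq> 0"
  shows "toeplitz_inner (szego_moment v) p p > 0"
  using \<open>p \<noteq> 0\<close>
proof (induction "degree p" arbitrary: p rule: less_induct)
  case less
  let ?IP = "toeplitz_inner (szego_moment v)"
  define d where "d = degree p"
  define a where "a = lead_coeff p"
  define r where "r = p - smult a (szego_poly v d)"
  have a: "a \<noteq> 0" using less.prems by (simp add: a_def)
  have p: "p = smult a (szego_poly v d) + r" by (simp add: r_def)
  have "degree r \<le> d"
    unfolding r_def using degree_smult_le[of a "szego_poly v d"]
    by (intro degree_diff_le) (auto simp: d_def)
  moreover have "coeff r d = 0" by (simp add: r_def a_def d_def)
  ultimately have r: "r = 0 \<or> degree r < d"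
    by (metis le_neq_implies_less leading_coeff_0_iff)
  have r_nonneg: "?IP r r \<ge> 0"
    using r less.hyps[of r] by (cases "r = 0") (auto simp: d_def toeplitz_inner_def)
  have r_orth: "?IP (szego_poly v d) r = 0"
    using r toeplitz_inner_szego_lower[of r d v] by (cases "r = 0") (simp_all add: toeplitz_inner_def)
  have "?IP p p = a * ?IP (szego_poly v d) p + ?IP r p"
    by (subst (1) p) (simp add: toeplitz_inner_add_left toeplitz_inner_smult_left)
  also have "?IP r p = ?IP p r" by (rule toeplitz_inner_commute) simp
  also have "?IP p r = a * ?IP (szego_poly v d) r + ?IP r r"
    by (subst (1) p) (simp add: toeplitz_inner_add_left toeplitz_inner_smult_left)
  finally have "?IP p p = a * a * szego_norm v d + ?IP r r"
    using r_orth toeplitz_inner_szego_top[of p d v] by (simp add: a_def d_def)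
  moreover have "a * a > 0" using a not_real_square_gt_zero by blast
  hence "a * a * szego_norm v d > 0" using szego_norm_pos[of v d] bounded by simp
  ultimately show ?case using r_nonneg by simp
qed

lemma toeplitz_quadratic_szego_nonneg:
  assumes "\<And>k. \<bar>v k\<bar> < 1"
  shows "toeplitz_quadratic (szego_moment v) N w \<ge> 0"
proof (cases "Poly (map w [0..<N]) = 0")
  case True
  thus ?thesis by (simp only: toeplitz_quadratic_eq_inner True) (simp add: toeplitz_inner_def)
next
  case False
  show ?thesis
    unfolding toeplitz_quadratic_eq_inner by (rule less_imp_le, rule toeplitz_inner_szego_pos) fact+
qed

section \<open>Positive Toeplitz forms are moment sequences\<close>

lemma has_integral_cos_mult_cos:
  "((\<lambda>\<theta>. cos (real_of_int m * \<theta>) * cos (real_of_int r * \<theta>)) has_integral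
     pi * (of_bool (m + r = 0) + of_bool (m - r = 0))) {-pi..pi}"
proof -
  have "(\<lambda>\<theta>. cos (real_of_int m * \<theta>) * cos (real_of_int r * \<theta>))
      = (\<lambda>\<theta>. (cos (real_of_int (m + r) * \<theta>) + cos (real_of_int (m - r) * \<theta>)) / 2)"
    by (simp add: fun_eq_iff distrib_right left_diff_distrib cos_add cos_diff)
  moreover have "((\<lambda>\<theta>. (cos (real_of_int (m + r) * \<theta>) + cos (real_of_int (m - r) * \<theta>)) / 2)
      has_integral ((if m + r = 0 then 2 * pi else 0) + (if m - r = 0 then 2 * pi else 0)) / 2) {-pi..pi}"
    by (intro has_integral_divide has_integral_add has_integral_cos_nx)
  moreover have "((if m + r = 0 then 2 * pi else 0) + (if m - r = 0 then 2 * pi else 0)) / 2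
      = pi * (of_bool (m + r = 0) + of_bool (m - r = 0))"
    by simp
  ultimately show ?thesis by (simp only:)
qed

lemma has_integral_cos_mult_sin:
  "((\<lambda>\<theta>. cos (real_of_int m * \<theta>) * sin (real_of_int r * \<theta>)) has_integral 0) {-pi..pi}"
proof -
  have "(\<lambda>\<theta>. cos (real_of_int m * \<theta>) * sin (real_of_int r * \<theta>))
      = (\<lambda>\<theta>. (sin (real_of_int (r + m) * \<theta>) + sin (real_of_int (r - m) * \<theta>)) / 2)"
    by (simp add: fun_eq_iff distrib_right left_diff_distrib sin_add sin_diff)
  moreover have "((\<lambda>\<theta>. (sin (real_of_int (r + m) * \<theta>) + sin (real_of_int (r - m) * \<theta>)) / 2)
      has_integral (0 + 0) / 2) {-pi..pi}"
    by (intro has_integral_divide has_integral_add has_integral_sin_nx)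
  ultimately show ?thesis by simp
qed

lemma sum_lessThan_diagonal:
  "(\<Sum>j<N. \<Sum>l<N. if int j - int l = r then x else 0) = real (N - nat \<bar>r\<bar>) * (x :: real)"
proof -
  have count: "(\<Sum>l<N. if l + k < N then x else 0) = real (N - k) * x" for k
  proof -
    have "(\<Sum>l<N. if l + k < N then x else 0) = (\<Sum>l<N - k. x)"
      by (rule sum.mono_neutral_cong_right) auto
    thus ?thesis by simp
  qed
  show ?thesis
  proof (cases "r \<ge> 0")
    case True
    define k where "k = nat r"
    have r: "r = int k" using True by (simp add: k_def)
    have "(\<Sum>j<N. \<Sum>l<N. if int j - int l = r then x else 0) = (\<Sum>l<N. \<Sum>j<N. if j = l + k then x else 0)"
      by (subst sum.swap) (intro sum.cong refl, auto simp: r)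
    also have "\<dots> = real (N - k) * x" by (simp add: count)
    finally show ?thesis by (simp add: r)
  next
    case False
    define k where "k = nat (- r)"
    have r: "r = - int k" using False by (simp add: k_def)
    have "(\<Sum>j<N. \<Sum>l<N. if int j - int l = r then x else 0) = (\<Sum>j<N. \<Sum>l<N. if l = j + k then x else 0)"
      by (intro sum.cong refl) (auto simp: r)
    also have "\<dots> = real (N - k) * x" by (simp add: count)
    finally show ?thesis by (simp add: r)
  qed
qed

lemma LIMSEQ_Suc_diff_divide_Suc: "(\<lambda>n. real (Suc n - k) / real (Suc n)) \<longlonglongrightarrow> 1"
proof -
  have "\<forall>\<^sub>F n in sequentially. 1 - real k * (1 / real (Suc n)) = real (Suc n - k) / real (Suc n)"
    using eventually_ge_at_top[of k] by eventually_elim (simp add: of_nat_diff field_simps)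
  moreover have "(\<lambda>n. 1 / real (Suc n)) \<longlonglongrightarrow> 0" using LIMSEQ_Suc[OF lim_1_over_n] by simp
  hence "(\<lambda>n. 1 - real k * (1 / real (Suc n))) \<longlonglongrightarrow> 1 - real k * 0" by (intro tendsto_intros)
  ultimately show ?thesis using Lim_transform_eventually by simp
qed

locale positive_toeplitz =
  fixes c :: "int \<Rightarrow> real"
  assumes moment_uminus: "c (- m) = c m"
    and moment_zero: "c 0 = 1"
    and toeplitz_quadratic_nonneg: "toeplitz_quadratic c N w \<ge> 0"
begin

text \<open>The \<open>N\<close>-th Fejer mean of the formal density \<open>\<Sum>\<^sub>m c m e\<^sup>i\<^sup>m\<^sup>\<theta> / 2\<pi>\<close>.
  Its numerator is the Toeplitz form at the vector \<open>(e\<^sup>i\<^sup>j\<^sup>\<theta>)\<^sub>j\<^sub><\<^sub>N\<close>, hence nonnegative.\<close>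
definition fejer_density :: "nat \<Rightarrow> real \<Rightarrow> real" where
  "fejer_density N \<theta> =
     (\<Sum>j<N. \<Sum>l<N. c (int j - int l) * cos (real_of_int (int j - int l) * \<theta>)) / (2 * pi * real N)"

lemma fejer_density_nonneg: "fejer_density N \<theta> \<ge> 0"
proof -
  have "(\<Sum>j<N. \<Sum>l<N. c (int j - int l) * cos (real_of_int (int j - int l) * \<theta>))
      = toeplitz_quadratic c N (\<lambda>j. cos (real j * \<theta>)) + toeplitz_quadratic c N (\<lambda>j. sin (real j * \<theta>))"
    unfolding toeplitz_quadratic_def sum.distrib[symmetric]
    by (intro sum.cong refl) (simp add: left_diff_distrib cos_diff algebra_simps)
  thus ?thesis
    unfolding fejer_density_def using toeplitz_quadratic_nonneg by (simp add: divide_nonneg_pos)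
qed

lemma continuous_on_fejer_density: "continuous_on UNIV (fejer_density N)"
  unfolding fejer_density_def divide_inverse by (intro continuous_intros)

lemma has_integral_fejer_density_cos:
  "((\<lambda>\<theta>. fejer_density N \<theta> * cos (real_of_int r * \<theta>)) has_integral
     real (N - nat \<bar>r\<bar>) / real N * c r) {-pi..pi}"
proof -
  let ?a = "\<lambda>j l. c (int j - int l) / (2 * pi * real N)"
  let ?v = "\<Sum>j<N. \<Sum>l<N. ?a j l * (pi * (of_bool (int j - int l + r = 0) + of_bool (int j - int l - r = 0)))"
  have "((\<lambda>\<theta>. \<Sum>j<N. \<Sum>l<N. ?a j l * (cos (real_of_int (int j - int l) * \<theta>) * cos (real_of_int r * \<theta>)))
      has_integral ?v) {-pi..pi}"
    by (intro has_integral_sum finite_lessThan has_integral_mult_right has_integral_cos_mult_cos)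
  moreover have "(\<lambda>\<theta>. fejer_density N \<theta> * cos (real_of_int r * \<theta>))
      = (\<lambda>\<theta>. \<Sum>j<N. \<Sum>l<N. ?a j l * (cos (real_of_int (int j - int l) * \<theta>) * cos (real_of_int r * \<theta>)))"
    by (simp add: fun_eq_iff fejer_density_def sum_divide_distrib sum_distrib_right mult.assoc)
  moreover have "?v = ((\<Sum>j<N. \<Sum>l<N. if int j - int l = - r then c r else 0)
        + (\<Sum>j<N. \<Sum>l<N. if int j - int l = r then c r else 0)) / (2 * real N)"
    unfolding sum.distrib[symmetric] sum_divide_distrib
    by (intro sum.cong refl) (auto simp: moment_uminus)
  moreover have "\<dots> = real (N - nat \<bar>r\<bar>) / real N * c r"
    by (simp add: sum_lessThan_diagonal)
  ultimately show ?thesis by (simp only:)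
qed

lemma has_integral_fejer_density_sin:
  "((\<lambda>\<theta>. fejer_density N \<theta> * sin (real_of_int r * \<theta>)) has_integral 0) {-pi..pi}"
proof -
  let ?a = "\<lambda>j l. c (int j - int l) / (2 * pi * real N)"
  have "((\<lambda>\<theta>. \<Sum>j<N. \<Sum>l<N. ?a j l * (cos (real_of_int (int j - int l) * \<theta>) * sin (real_of_int r * \<theta>)))
      has_integral (\<Sum>j<N. \<Sum>l<N. ?a j l * 0)) {-pi..pi}"
    by (intro has_integral_sum finite_lessThan has_integral_mult_right has_integral_cos_mult_sin)
  moreover have "(\<lambda>\<theta>. fejer_density N \<theta> * sin (real_of_int r * \<theta>))
      = (\<lambda>\<theta>. \<Sum>j<N. \<Sum>l<N. ?a j l * (cos (real_of_int (int j - int l) * \<theta>) * sin (real_of_int r * \<theta>)))"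
    by (simp add: fun_eq_iff fejer_density_def sum_divide_distrib sum_distrib_right mult.assoc)
  ultimately show ?thesis by (simp only: mult_zero_right sum.neutral_const)
qed

definition fejer_measure :: "nat \<Rightarrow> real measure" where
  "fejer_measure N = density lborel (\<lambda>\<theta>. ennreal (indicator {-pi..pi} \<theta> * fejer_density N \<theta>))"

lemma sets_fejer_measure [simp]: "sets (fejer_measure N) = sets borel"
  and space_fejer_measure [simp]: "space (fejer_measure N) = UNIV"
  by (simp_all add: fejer_measure_def)

lemma borel_measurable_fejer_density [measurable]: "fejer_density N \<in> borel_measurable borel"
  using continuous_on_fejer_density by (rule borel_measurable_continuous_onI)

lemma integral_fejer_measure:
  fixes g :: "real \<Rightarrow> real"
  assumes g: "continuous_on UNIV g"
  shows "integral\<^sup>L (fejer_measure N) g = integral {-pi..pi} (\<lambda>\<theta>. fejer_density N \<theta> * g \<theta>)"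
proof -
  have [measurable]: "g \<in> borel_measurable borel" using g by (rule borel_measurable_continuous_onI)
  have "integral\<^sup>L (fejer_measure N) g
      = integral\<^sup>L lborel (\<lambda>\<theta>. (indicator {-pi..pi} \<theta> * fejer_density N \<theta>) *\<^sub>R g \<theta>)"
    unfolding fejer_measure_def using fejer_density_nonneg by (subst integral_density) auto
  also have "\<dots> = (LINT \<theta>:{-pi..pi}|lborel. fejer_density N \<theta> * g \<theta>)"
    unfolding set_lebesgue_integral_def by (simp add: algebra_simps)
  also have "\<dots> = integral {-pi..pi} (\<lambda>\<theta>. fejer_density N \<theta> * g \<theta>)"
    using continuous_on_fejer_density g
    by (intro set_borel_integral_eq_integral(2) borel_integrable_atLeastAtMost' continuous_intros)
      (auto intro: continuous_on_subset)
  finally show ?thesis .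
qed

lemma integral_fejer_measure_cos:
  "integral\<^sup>L (fejer_measure N) (\<lambda>\<theta>. cos (real_of_int r * \<theta>)) = real (N - nat \<bar>r\<bar>) / real N * c r"
  by (subst integral_fejer_measure)
    (intro continuous_intros, rule integral_unique[OF has_integral_fejer_density_cos])

lemma integral_fejer_measure_sin:
  "integral\<^sup>L (fejer_measure N) (\<lambda>\<theta>. sin (real_of_int r * \<theta>)) = 0"
  by (subst integral_fejer_measure)
    (auto intro!: continuous_intros integral_unique has_integral_fejer_density_sin)

lemma emeasure_fejer_measure:
  assumes "N > 0" "{-pi..pi} \<subseteq> A" "A \<in> sets borel"
  shows "emeasure (fejer_measure N) A = 1"
proof -
  have "emeasure (fejer_measure N) A
      = (\<integral>\<^sup>+ \<theta>. ennreal (indicator {-pi..pi} \<theta> * fejer_density N \<theta>) * indicator A \<theta> \<partial>lborel)"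
    unfolding fejer_measure_def using assms(3) by (subst emeasure_density) auto
  also have "\<dots> = (\<integral>\<^sup>+ \<theta>. ennreal (indicator {-pi..pi} \<theta> * fejer_density N \<theta>) \<partial>lborel)"
    using assms(2) by (intro nn_integral_cong) (auto simp: indicator_def)
  also have "\<dots> = ennreal (real (N - nat \<bar>0\<bar>) / real N * c 0)"
    using has_integral_fejer_density_cos[of N 0] fejer_density_nonneg
    by (intro nn_integral_has_integral_lebesgue) auto
  finally show ?thesis using assms(1) by (simp add: moment_zero)
qed

lemma real_distribution_fejer_measure: "N > 0 \<Longrightarrow> real_distribution (fejer_measure N)"
  unfolding real_distribution_def real_distribution_axioms_def
  by (auto intro!: prob_spaceI simp: emeasure_fejer_measure)

lemma tight_fejer_measure: "tight (\<lambda>n. fejer_measure (Suc n))"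
  unfolding tight_def
proof (intro conjI allI impI)
  show "real_distribution (fejer_measure (Suc n))" for n by (simp add: real_distribution_fejer_measure)
  have "{-pi..pi} \<subseteq> {-4<..4::real}" using pi_less_4 by auto
  hence "measure (fejer_measure (Suc n)) {-4<..4} = 1" for n
    by (simp add: measure_def emeasure_fejer_measure)
  thus "\<exists>a b::real. a < b \<and> (\<forall>n. measure (fejer_measure (Suc n)) {a<..b} > 1 - e)" if "e > 0" for e
    using that by (intro exI[of _ "-4"] exI[of _ 4]) simp
qed

text \<open>Herglotz: a limit point of the Fejer measures (Helly selection) has the moments \<open>c\<close>.\<close>
theorem exists_distribution_with_moments:
  "\<exists>M. real_distribution M \<and> (\<forall>r. integral\<^sup>L M (\<lambda>\<theta>. cos (real_of_int r * \<theta>)) = c r)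
      \<and> (\<forall>r. integral\<^sup>L M (\<lambda>\<theta>. sin (real_of_int r * \<theta>)) = 0)"
proof -
  obtain s M where s: "strict_mono (s :: nat \<Rightarrow> nat)" and M: "real_distribution M"
    and conv: "weak_conv_m ((\<lambda>n. fejer_measure (Suc n)) \<circ> id \<circ> s) M"
    using tight_imp_convergent_subsubsequence[OF tight_fejer_measure, of id]
    by (auto simp: strict_mono_def)
  have lim: "(\<lambda>n. integral\<^sup>L (fejer_measure (Suc (s n))) f) \<longlonglongrightarrow> integral\<^sup>L M f"
    if "\<And>x. isCont f x" "\<And>x. norm (f x) \<le> 1" for f :: "real \<Rightarrow> real"
    using weak_conv_imp_integral_bdd_continuous_conv[OF _ M conv that]
    by (simp add: real_distribution_fejer_measure)
  have "integral\<^sup>L M (\<lambda>\<theta>. cos (real_of_int r * \<theta>)) = c r" for r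
  proof (rule LIMSEQ_unique)
    show "(\<lambda>n. integral\<^sup>L (fejer_measure (Suc (s n))) (\<lambda>\<theta>. cos (real_of_int r * \<theta>)))
        \<longlonglongrightarrow> integral\<^sup>L M (\<lambda>\<theta>. cos (real_of_int r * \<theta>))"
      by (rule lim) (auto intro!: continuous_intros)
    have "(\<lambda>n. real (Suc n - nat \<bar>r\<bar>) / real (Suc n) * c r) \<longlonglongrightarrow> 1 * c r"
      by (intro tendsto_intros LIMSEQ_Suc_diff_divide_Suc)
    from LIMSEQ_subseq_LIMSEQ[OF this s]
    show "(\<lambda>n. integral\<^sup>L (fejer_measure (Suc (s n))) (\<lambda>\<theta>. cos (real_of_int r * \<theta>))) \<longlonglongrightarrow> c r"
      by (simp add: integral_fejer_measure_cos comp_def)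
  qed
  moreover have "integral\<^sup>L M (\<lambda>\<theta>. sin (real_of_int r * \<theta>)) = 0" for r
    using lim[of "\<lambda>\<theta>. sin (real_of_int r * \<theta>)"]
    by (intro LIMSEQ_unique[OF _ tendsto_const]) (auto intro!: continuous_intros simp: integral_fejer_measure_sin)
  ultimately show ?thesis using M by blast
qed

end

section \<open>Measures on the unit circle\<close>

lemma map_poly_of_real_add:
  "map_poly of_real (p + q) = map_poly of_real p + (map_poly of_real q :: 'a::{real_algebra_1, comm_ring_1} poly)"
  by (intro poly_eqI) (simp add: coeff_map_poly)

lemma map_poly_of_real_mult:
  "map_poly of_real (p * q) = map_poly of_real p * (map_poly of_real q :: 'a::{real_algebra_1, comm_ring_1} poly)"
  by (intro poly_eqI) (simp add: coeff_map_poly coeff_mult)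

lemma map_poly_of_real_prod:
  "map_poly of_real (\<Prod>x\<in>A. f x) = (\<Prod>x\<in>A. map_poly of_real (f x) :: 'a::{real_algebra_1, comm_ring_1} poly)"
  by (induction A rule: infinite_finite_induct) (auto simp: map_poly_of_real_mult)

lemma map_poly_of_real_smult:
  "map_poly of_real (smult a p) = smult (of_real a) (map_poly of_real p :: 'a::{real_algebra_1, comm_ring_1} poly)"
  by (intro poly_eqI) (simp add: coeff_map_poly)

lemma degree_map_poly_of_real [simp]:
  "degree (map_poly of_real p :: 'a::{real_algebra_1, comm_ring_1} poly) = degree p"
  by (rule degree_map_poly) simp

lemma poly_map_poly_of_real:
  "poly (map_poly of_real p) z = (\<Sum>j\<le>degree p. of_real (coeff p j) * (z :: 'a::{real_algebra_1, comm_ring_1}) ^ j)"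
  by (simp add: poly_altdef coeff_map_poly)

lemma reversed_poly_of_real:
  "reversed_poly (map_poly complex_of_real p) = map_poly complex_of_real (reflect_poly p)"
proof -
  have "map_poly cnj (map_poly complex_of_real p) = map_poly complex_of_real p"
    by (intro poly_eqI) (simp add: coeff_map_poly)
  thus ?thesis unfolding reversed_poly_def
    by (intro poly_eqI) (simp add: coeff_map_poly coeff_reflect_poly)
qed

lemma cis_power_mult_cnj: "cis \<theta> ^ j * cnj (cis \<theta> ^ l) = cis (real_of_int (int j - int l) * \<theta>)"
proof -
  have "cis \<theta> ^ j * cnj (cis \<theta> ^ l) = cis (real j * \<theta>) * cis (- (real l * \<theta>))"
    by (simp only: Complex.DeMoivre cis_cnj)
  thus ?thesis by (simp add: cis_mult left_diff_distrib)
qed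

definition circle_measure :: "real measure \<Rightarrow> complex measure" where
  "circle_measure M = distr M borel cis"

lemma sets_circle_measure [simp]: "sets (circle_measure M) = sets borel"
  by (simp add: circle_measure_def)

context real_distribution
begin

lemma borel_measurable_continuous_on_UNIV:
  "continuous_on UNIV f \<Longrightarrow> f \<in> borel_measurable M"
  using borel_measurable_continuous_onI[of f] by (simp add: measurable_def)

lemma integrable_bounded_continuous:
  fixes f :: "real \<Rightarrow> 'b::{banach, second_countable_topology}"
  assumes "continuous_on UNIV f" "\<And>x. norm (f x) \<le> B"
  shows "integrable M f"
  using assms by (intro integrable_const_bound[where B=B] borel_measurable_continuous_on_UNIV) simp_all

lemma prob_space_circle_measure: "prob_space (circle_measure M)"
  unfolding circle_measure_def
  by (intro prob_space_distr borel_measurable_continuous_on_UNIV continuous_intros)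

lemma AE_circle_measure: "AE z in circle_measure M. cmod z = 1"
  unfolding circle_measure_def
  by (subst AE_distr_iff) (auto intro!: borel_measurable_continuous_on_UNIV continuous_intros)

lemma integral_circle_measure:
  fixes F :: "complex \<Rightarrow> complex"
  assumes "continuous_on UNIV F"
  shows "integral\<^sup>L (circle_measure M) F = integral\<^sup>L M (\<lambda>\<theta>. F (cis \<theta>))"
  unfolding circle_measure_def using assms
  by (intro integral_distr borel_measurable_continuous_on_UNIV continuous_intros)
    (simp add: borel_measurable_continuous_onI)

end

context
  fixes c :: "int \<Rightarrow> real" and M :: "real measure"
  assumes M: "real_distribution M"
    and moment_cos: "\<And>r. integral\<^sup>L M (\<lambda>\<theta>. cos (real_of_int r * \<theta>)) = c r"
    and moment_sin: "\<And>r. integral\<^sup>L M (\<lambda>\<theta>. sin (real_of_int r * \<theta>)) = 0"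
begin

interpretation real_distribution M by (rule M)

lemma integrable_cis_mult: "integrable M (\<lambda>\<theta>. cis (real_of_int r * \<theta>))"
  by (rule integrable_bounded_continuous[where B = 1]) (auto intro!: continuous_intros)

lemma integral_cis_mult: "integral\<^sup>L M (\<lambda>\<theta>. cis (real_of_int r * \<theta>)) = of_real (c r)"
proof -
  have "cis x = of_real (cos x) + \<i> * of_real (sin x)" for x by (simp add: complex_eq_iff)
  hence "integral\<^sup>L M (\<lambda>\<theta>. cis (real_of_int r * \<theta>))
      = integral\<^sup>L M (\<lambda>\<theta>. of_real (cos (real_of_int r * \<theta>)) + \<i> * of_real (sin (real_of_int r * \<theta>)))"
    by simp
  also have "\<dots> = of_real (c r)"
    by (subst Bochner_Integration.integral_add)
      (auto intro!: integrable_bounded_continuous[where B = 1] continuous_intros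
        simp: norm_mult moment_cos moment_sin)
  finally show ?thesis .
qed

lemma integral_circle_measure_poly_cnj:
  "integral\<^sup>L (circle_measure M)
     (\<lambda>z. poly (map_poly complex_of_real p) z * cnj (poly (map_poly complex_of_real q) z))
   = of_real (toeplitz_inner c p q)"
proof -
  have "poly (map_poly complex_of_real p) (cis \<theta>) * cnj (poly (map_poly complex_of_real q) (cis \<theta>))
      = (\<Sum>j\<le>degree p. \<Sum>l\<le>degree q.
          of_real (coeff p j * coeff q l) * cis (real_of_int (int j - int l) * \<theta>))" for \<theta>
    unfolding poly_map_poly_of_real cnj_sum sum_product
  proof (intro sum.cong refl)
    fix j l
    have "of_real (coeff p j) * cis \<theta> ^ j * cnj (of_real (coeff q l) * cis \<theta> ^ l)
        = of_real (coeff p j * coeff q l) * (cis \<theta> ^ j * cnj (cis \<theta> ^ l))"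
      by (simp add: algebra_simps)
    thus "of_real (coeff p j) * cis \<theta> ^ j * cnj (of_real (coeff q l) * cis \<theta> ^ l)
        = of_real (coeff p j * coeff q l) * cis (real_of_int (int j - int l) * \<theta>)"
      by (simp only: cis_power_mult_cnj)
  qed
  hence "integral\<^sup>L (circle_measure M)
       (\<lambda>z. poly (map_poly complex_of_real p) z * cnj (poly (map_poly complex_of_real q) z))
      = integral\<^sup>L M (\<lambda>\<theta>. \<Sum>j\<le>degree p. \<Sum>l\<le>degree q.
          of_real (coeff p j * coeff q l) * cis (real_of_int (int j - int l) * \<theta>))"
    by (subst integral_circle_measure) (auto intro!: continuous_intros)
  also have "\<dots> = (\<Sum>j\<le>degree p. \<Sum>l\<le>degree q.
      of_real (coeff p j * coeff q l) * of_real (c (int j - int l)))"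
    by (simp only: Bochner_Integration.integral_sum Bochner_Integration.integrable_sum
        integrable_mult_right integrable_cis_mult integral_mult_right_zero integral_cis_mult)
  also have "\<dots> = of_real (toeplitz_inner c p q)"
    by (simp add: toeplitz_inner_altdef)
  finally show ?thesis .
qed

text \<open>If the measure lived on a finite set \<open>F\<close>, the nonzero real polynomial
  \<open>h = \<Prod>\<^sub>w\<^sub>\<in>\<^sub>F (z - w)(z - cnj w)\<close> would have \<open>\<integral> |h|\<^sup>2 = 0\<close>.\<close>
lemma measure_circle_measure_cofinite_pos:
  assumes pos: "\<And>p. p \<noteq> 0 \<Longrightarrow> toeplitz_inner c p p > 0" and "finite F"
  shows "measure (circle_measure M) (UNIV - F) > 0"
proof (rule ccontr)
  interpret circle: prob_space "circle_measure M" by (rule prob_space_circle_measure)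
  assume "\<not> measure (circle_measure M) (UNIV - F) > 0"
  hence "emeasure (circle_measure M) (UNIV - F) = 0"
    using measure_nonneg[of "circle_measure M" "UNIV - F"] by (simp add: circle.emeasure_eq_measure)
  moreover have "UNIV - F \<in> sets (circle_measure M)"
    using \<open>finite F\<close> by (simp add: finite_imp_closed open_Diff)
  ultimately have concentrated: "AE z in circle_measure M. z \<in> F"
    by (intro AE_I) auto
  define h where "h = (\<Prod>w\<in>F. [:(Re w)\<^sup>2 + (Im w)\<^sup>2, -2 * Re w, 1::real:])"
  have "h \<noteq> 0" unfolding h_def using \<open>finite F\<close> by simp
  have "poly (map_poly complex_of_real h) w = 0" if "w \<in> F" for w
  proof -
    have "poly (map_poly complex_of_real [:(Re w)\<^sup>2 + (Im w)\<^sup>2, -2 * Re w, 1:]) w = 0"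
      by (simp add: map_poly_pCons complex_eq_iff power2_eq_square algebra_simps)
    thus ?thesis
      unfolding h_def map_poly_of_real_prod poly_prod using \<open>finite F\<close> that by (auto simp: prod_zero_iff)
  qed
  hence "integral\<^sup>L (circle_measure M)
       (\<lambda>z. poly (map_poly complex_of_real h) z * cnj (poly (map_poly complex_of_real h) z)) = 0"
    by (intro integral_eq_zero_AE) (use concentrated in eventually_elim, simp)
  thus False
    using pos[OF \<open>h \<noteq> 0\<close>] by (simp add: integral_circle_measure_poly_cnj)
qed

end

theorem szego_measure_exists:
  assumes bounded: "\<And>k. \<bar>v k\<bar> < 1"
  shows "\<exists>\<mu>. nontrivial_circle_prob \<mu> \<and> monic_OPUC \<mu> (\<lambda>n. map_poly complex_of_real (szego_poly v n))"
proof -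
  interpret positive_toeplitz "szego_moment v"
    by unfold_locales (simp_all add: toeplitz_quadratic_szego_nonneg bounded)
  obtain M where M: "real_distribution M"
    and cos: "\<And>r. integral\<^sup>L M (\<lambda>\<theta>. cos (real_of_int r * \<theta>)) = szego_moment v r"
    and sin: "\<And>r. integral\<^sup>L M (\<lambda>\<theta>. sin (real_of_int r * \<theta>)) = 0"
    using exists_distribution_with_moments by blast
  interpret real_distribution M by (fact M)
  have "nontrivial_circle_prob (circle_measure M)"
    unfolding nontrivial_circle_prob_def
    using prob_space_circle_measure AE_circle_measure
      measure_circle_measure_cofinite_pos[OF M cos sin toeplitz_inner_szego_pos[OF bounded]]
    by simp
  moreover have "monic_OPUC (circle_measure M) (\<lambda>n. map_poly complex_of_real (szego_poly v n))"
    unfolding monic_OPUC_def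
  proof (intro allI conjI impI)
    fix n k :: nat assume "k < n"
    have "z ^ k = poly (map_poly complex_of_real (monom 1 k)) z" for z :: complex
      by (simp add: map_poly_monom poly_monom)
    thus "integral\<^sup>L (circle_measure M) (\<lambda>z. poly (map_poly complex_of_real (szego_poly v n)) z * cnj (z ^ k)) = 0"
      using szego_orthogonal[of n v] \<open>k < n\<close>
      by (simp add: integral_circle_measure_poly_cnj[OF M cos sin] toeplitz_inner_monom_right)
  qed (simp_all add: coeff_map_poly)
  ultimately show ?thesis by blast
qed

section \<open>The three-term recurrence\<close>

lemma three_term_step_sum:
  fixes x P P' T T' K r b t a a' :: real
  assumes sum: "P + a * P' = K * (x - 1) * T'"
    and scaled: "(a * r - t) * P = K * (a * r * T - t * x * T')"
    and rec: "a * a' = - r * a + t + r * b * a"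
    and "a \<noteq> 0"
  shows "r * (x - b) * P + t * x * P' + a' * P = K * r * (x - 1) * T"
  using assms by algebra

lemma three_term_step_scaled:
  fixes x P P' T T' K r b t a r' t' a' :: real
  assumes sum: "P + a * P' = K * (x - 1) * T'"
    and scaled: "(a * r - t) * P = K * (a * r * T - t * x * T')"
    and rec: "a * a' = - r * a + t + r * b * a"
    and eq1: "a' * r' = (2 * r' + t') * (r * a - t) + t'"
    and eq2: "a' * r' = - r * b * (2 * r' + t') * a"
    and "a \<noteq> 0" "a * r - t \<noteq> 0" "2 * r' + t' \<noteq> 0"
  shows "r' * (a' * r' - t') * (r * (x - b) * P + t * x * P')
     = K * (a' * r' * (r * r' * (x + 1) * T + t * (2 * r' + t') * x * T') - r * r' * t' * x * T)"
  using assms by algebra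

locale three_term_para =
  fixes \<rho> \<beta> \<tau> \<alpha> :: "nat \<Rightarrow> real"
  assumes rho_nonzero: "\<And>n. \<rho> n \<noteq> 0"
    and ratio_bounds: "\<And>n. -2 < \<tau> n / \<rho> n \<and> \<tau> n / \<rho> n < 0"
    and beta0_nonzero: "\<beta> 0 \<noteq> 0"
    and tau1: "\<tau> 1 / \<rho> 1 = \<rho> 0 / \<beta> 0 * ((\<beta> 0)\<^sup>2 - 1)"
    and alpha_nonzero: "\<And>n. \<alpha> n \<noteq> 0"
    and alpha1: "\<alpha> 1 = \<rho> 0 * (\<beta> 0 - 1)"
    and alpha_rec: "\<And>n. n \<ge> 2 \<Longrightarrow>
          \<alpha> n = - (\<rho> (n - 1) - \<tau> (n - 1) / \<alpha> (n - 1)) + \<rho> (n - 1) * \<beta> (n - 1)"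
    and alpha_eq1: "\<And>n. n \<ge> 2 \<Longrightarrow>
          \<alpha> n * \<rho> n = (2 * \<rho> n + \<tau> n) * (\<rho> (n - 1) * \<alpha> (n - 1) - \<tau> (n - 1)) + \<tau> n"
    and alpha_eq2: "\<And>n. n \<ge> 2 \<Longrightarrow>
          \<alpha> n * \<rho> n = - \<rho> (n - 1) * \<beta> (n - 1) * (2 * \<rho> n + \<tau> n) * \<alpha> (n - 1)"
    and p_nonzero: "\<And>n. n \<ge> 1 \<Longrightarrow> \<alpha> n * \<rho> n - \<tau> n \<noteq> 0"
begin

definition chain_coeff :: "nat \<Rightarrow> real" where
  "chain_coeff n = - (\<tau> n / \<rho> n) * (2 + \<tau> (Suc n) / \<rho> (Suc n))"

fun Tpoly :: "nat \<Rightarrow> real poly" where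
  "Tpoly 0 = 1"
| "Tpoly (Suc 0) = [:1, 1:]"
| "Tpoly (Suc (Suc n)) = [:1, 1:] * Tpoly (Suc n) - smult (chain_coeff (Suc n)) ([:0, 1:] * Tpoly n)"

lemma two_rho_plus_tau_nonzero: "2 * \<rho> n + \<tau> n \<noteq> 0"
proof
  assume "2 * \<rho> n + \<tau> n = 0"
  hence "\<tau> n / \<rho> n = -2" using rho_nonzero[of n] by (simp add: field_simps)
  thus False using ratio_bounds[of n] by simp
qed

lemma alpha_rec_cleared:
  "\<alpha> (Suc k) * \<alpha> (Suc (Suc k)) = - \<rho> (Suc k) * \<alpha> (Suc k) + \<tau> (Suc k) + \<rho> (Suc k) * \<beta> (Suc k) * \<alpha> (Suc k)"
  using alpha_rec[of "Suc (Suc k)"] alpha_nonzero[of "Suc k"] by (simp add: field_simps)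

lemma chain_coeff_cleared:
  "\<rho> n * \<rho> (Suc n) * chain_coeff n = - \<tau> n * (2 * \<rho> (Suc n) + \<tau> (Suc n))"
  using rho_nonzero[of n] rho_nonzero[of "Suc n"] by (simp add: chain_coeff_def field_simps)

text \<open>With \<open>\<kappa>\<^sub>k = \<rho>\<^sub>0\<cdots>\<rho>\<^sub>k\<close>: \<open>p\<^sub>k\<^sub>+\<^sub>1 P\<^sub>k\<^sub>+\<^sub>1 = \<kappa>\<^sub>k (\<alpha>\<^sub>k\<^sub>+\<^sub>1 \<rho>\<^sub>k\<^sub>+\<^sub>1 T\<^sub>k\<^sub>+\<^sub>1 - \<tau>\<^sub>k\<^sub>+\<^sub>1 \<lambda> T\<^sub>k)\<close>
  and \<open>Q\<^sub>k\<^sub>+\<^sub>1 = \<kappa>\<^sub>k (\<lambda> - 1) T\<^sub>k\<close>; only the two together survive the induction step.\<close>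
definition Tpoly_relations :: "nat \<Rightarrow> real \<Rightarrow> bool" where
  "Tpoly_relations k x \<longleftrightarrow>
     (\<alpha> (Suc k) * \<rho> (Suc k) - \<tau> (Suc k)) * poly (Ppoly \<rho> \<beta> \<tau> (Suc k)) x
       = (\<Prod>i\<le>k. \<rho> i) * (\<alpha> (Suc k) * \<rho> (Suc k) * poly (Tpoly (Suc k)) x - \<tau> (Suc k) * x * poly (Tpoly k) x)
     \<and> poly (Ppoly \<rho> \<beta> \<tau> (Suc k)) x + \<alpha> (Suc k) * poly (Ppoly \<rho> \<beta> \<tau> k) x
       = (\<Prod>i\<le>k. \<rho> i) * (x - 1) * poly (Tpoly k) x"

lemma Tpoly_relations_0: "Tpoly_relations 0 x"
proof -
  have "\<tau> 1 * \<beta> 0 = \<rho> 1 * \<rho> 0 * ((\<beta> 0)\<^sup>2 - 1)"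
    using tau1 rho_nonzero[of 1] beta0_nonzero by (simp add: field_simps)
  hence "(\<alpha> 1 * \<rho> 1 - \<tau> 1) * (\<rho> 0 * (x - \<beta> 0)) = \<rho> 0 * (\<alpha> 1 * \<rho> 1 * (1 + x) - \<tau> 1 * x)"
    using alpha1 by algebra
  moreover have "\<rho> 0 * (x - \<beta> 0) + \<alpha> 1 = \<rho> 0 * (x - 1)"
    using alpha1 by (simp add: algebra_simps)
  ultimately show ?thesis by (simp add: Tpoly_relations_def algebra_simps)
qed

lemma Tpoly_relations_Suc:
  assumes "Tpoly_relations k x"
  shows "Tpoly_relations (Suc k) x"
proof -
  let ?P = "poly (Ppoly \<rho> \<beta> \<tau> (Suc k)) x" and ?P' = "poly (Ppoly \<rho> \<beta> \<tau> k) x"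
  let ?T = "poly (Tpoly (Suc k)) x" and ?T' = "poly (Tpoly k) x"
  let ?K = "\<Prod>i\<le>k. \<rho> i"
  note IH = assms[unfolded Tpoly_relations_def]
  have sum: "\<rho> (Suc k) * (x - \<beta> (Suc k)) * ?P + \<tau> (Suc k) * x * ?P' + \<alpha> (Suc (Suc k)) * ?P
      = ?K * \<rho> (Suc k) * (x - 1) * ?T"
    using IH alpha_rec_cleared alpha_nonzero by (intro three_term_step_sum) auto
  have scaled: "\<rho> (Suc (Suc k)) * (\<alpha> (Suc (Suc k)) * \<rho> (Suc (Suc k)) - \<tau> (Suc (Suc k)))
        * (\<rho> (Suc k) * (x - \<beta> (Suc k)) * ?P + \<tau> (Suc k) * x * ?P')
     = ?K * (\<alpha> (Suc (Suc k)) * \<rho> (Suc (Suc k)) * (\<rho> (Suc k) * \<rho> (Suc (Suc k)) * (x + 1) * ?T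
        + \<tau> (Suc k) * (2 * \<rho> (Suc (Suc k)) + \<tau> (Suc (Suc k))) * x * ?T')
        - \<rho> (Suc k) * \<rho> (Suc (Suc k)) * \<tau> (Suc (Suc k)) * x * ?T)"
    using IH alpha_rec_cleared alpha_eq1[of "Suc (Suc k)"] alpha_eq2[of "Suc (Suc k)"]
      alpha_nonzero p_nonzero[of "Suc k"] two_rho_plus_tau_nonzero
    by (intro three_term_step_scaled) auto
  have P: "poly (Ppoly \<rho> \<beta> \<tau> (Suc (Suc k))) x = \<rho> (Suc k) * (x - \<beta> (Suc k)) * ?P + \<tau> (Suc k) * x * ?P'"
    and T: "poly (Tpoly (Suc (Suc k))) x = (x + 1) * ?T - chain_coeff (Suc k) * x * ?T'"
    and K: "(\<Prod>i\<le>Suc k. \<rho> i) = ?K * \<rho> (Suc k)"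
    by (simp_all add: algebra_simps prod.atMost_Suc)
  have "\<rho> (Suc (Suc k)) * ((\<alpha> (Suc (Suc k)) * \<rho> (Suc (Suc k)) - \<tau> (Suc (Suc k)))
        * poly (Ppoly \<rho> \<beta> \<tau> (Suc (Suc k))) x)
      = \<rho> (Suc (Suc k)) * ((\<Prod>i\<le>Suc k. \<rho> i) * (\<alpha> (Suc (Suc k)) * \<rho> (Suc (Suc k))
        * poly (Tpoly (Suc (Suc k))) x - \<tau> (Suc (Suc k)) * x * ?T))"
    unfolding P T K using scaled chain_coeff_cleared[of "Suc k"] by algebra
  moreover have "poly (Ppoly \<rho> \<beta> \<tau> (Suc (Suc k))) x + \<alpha> (Suc (Suc k)) * ?P
      = (\<Prod>i\<le>Suc k. \<rho> i) * (x - 1) * ?T"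
    unfolding P K using sum by (simp add: algebra_simps)
  ultimately show ?thesis
    unfolding Tpoly_relations_def by (simp only: mult_left_cancel[OF rho_nonzero])
qed

lemma Qpoly_Suc_eq: "Qpoly \<rho> \<beta> \<tau> \<alpha> (Suc k) = smult (\<Prod>i\<le>k. \<rho> i) ([:-1, 1:] * Tpoly k)"
proof -
  have "Tpoly_relations k x" for x
    by (induction k) (simp_all add: Tpoly_relations_0 Tpoly_relations_Suc)
  hence "poly (Qpoly \<rho> \<beta> \<tau> \<alpha> (Suc k)) x = poly (smult (\<Prod>i\<le>k. \<rho> i) ([:-1, 1:] * Tpoly k)) x" for x
    by (simp add: Tpoly_relations_def Qpoly_def algebra_simps)
  thus ?thesis by (simp add: poly_eq_poly_eq_iff[symmetric] fun_eq_iff)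
qed

lemma Rpoly_eq_Tpoly: "Rpoly \<rho> \<beta> \<tau> \<alpha> k = Tpoly k"
proof -
  have "(\<Prod>i\<le>k. \<rho> i) \<noteq> 0" using rho_nonzero by (simp add: prod_zero_iff)
  moreover have "([:-1, 1:] * Tpoly k) div [:-1, 1:] = Tpoly k"
    by (rule nonzero_mult_div_cancel_left) simp
  ultimately show ?thesis by (simp add: Rpoly_def Qpoly_Suc_eq div_smult_left)
qed

text \<open>\<open>(1 + chain_param n) / 2\<close> is the minimal parameter sequence of the positive chain
  sequence \<open>chain_coeff / 4\<close>.\<close>
fun chain_param :: "nat \<Rightarrow> real" where
  "chain_param 0 = -1"
| "chain_param (Suc n) = chain_coeff (Suc n) / (1 - chain_param n) - 1"

declare chain_param.simps(2) [simp del]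

definition verblunsky :: "nat \<Rightarrow> real" where
  "verblunsky n = chain_param (Suc n)"

lemma chain_coeff_pos: "chain_coeff n > 0"
  using ratio_bounds[of n] ratio_bounds[of "Suc n"] unfolding chain_coeff_def
  by (intro mult_pos_pos) auto

lemma chain_param_bounds: "chain_param n \<le> 1 + \<tau> (Suc n) / \<rho> (Suc n) \<and> (n \<ge> 1 \<longrightarrow> -1 < chain_param n)"
proof (induction n)
  case 0
  show ?case using ratio_bounds[of 1] by simp
next
  case (Suc n)
  let ?t = "\<tau> (Suc n) / \<rho> (Suc n)"
  have denom: "1 - chain_param n \<ge> - ?t" and t: "- ?t > 0"
    using Suc ratio_bounds[of "Suc n"] by auto
  have "chain_coeff (Suc n) / (1 - chain_param n) \<le> chain_coeff (Suc n) / (- ?t)"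
    using denom t chain_coeff_pos[of "Suc n"] mult_pos_pos[of "1 - chain_param n" "- ?t"]
    by (intro divide_left_mono) auto
  also have "\<dots> = 2 + \<tau> (Suc (Suc n)) / \<rho> (Suc (Suc n))"
    unfolding chain_coeff_def using t by (subst nonzero_mult_div_cancel_left) auto
  moreover have "chain_coeff (Suc n) / (1 - chain_param n) > 0"
    using chain_coeff_pos[of "Suc n"] denom t by simp
  ultimately show ?case by (simp add: chain_param.simps(2))
qed

lemma chain_param_less_1: "chain_param n < 1"
  using chain_param_bounds[of n] ratio_bounds[of "Suc n"] by linarith

lemma verblunsky_bounded: "\<bar>verblunsky n\<bar> < 1"
  using chain_param_bounds[of "Suc n"] chain_param_less_1[of "Suc n"] by (simp add: verblunsky_def abs_less_iff)

lemma chain_coeff_factor: "chain_coeff (Suc n) = (1 + chain_param (Suc n)) * (1 - chain_param n)"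
  using chain_param_less_1[of n] by (simp add: chain_param.simps(2))

lemma Tpoly_szego_relations:
  "Tpoly (Suc n) = pCons 0 (szego_poly verblunsky n) + szego_rev verblunsky n
   \<and> szego_poly verblunsky n + szego_rev verblunsky n = smult (1 - chain_param n) (Tpoly n)"
proof (induction n)
  case 0
  show ?case by (simp add: one_pCons)
next
  case (Suc n)
  let ?\<phi> = "szego_poly verblunsky" and ?\<phi>' = "szego_rev verblunsky"
  have T: "poly (Tpoly (Suc n)) x = x * poly (?\<phi> n) x + poly (?\<phi>' n) x"
    and sum: "poly (?\<phi> n) x + poly (?\<phi>' n) x = (1 - chain_param n) * poly (Tpoly n) x" for x
    using Suc by (simp_all add: poly_eq_poly_eq_iff[symmetric] fun_eq_iff)
  have "poly (Tpoly (Suc (Suc n))) x = poly (pCons 0 (?\<phi> (Suc n)) + ?\<phi>' (Suc n)) x" for x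
  proof -
    have "poly (Tpoly (Suc (Suc n))) x
        = (1 + x) * poly (Tpoly (Suc n)) x - (1 + chain_param (Suc n)) * ((1 - chain_param n) * poly (Tpoly n) x) * x"
      by (simp add: chain_coeff_factor algebra_simps)
    also have "\<dots> = poly (pCons 0 (?\<phi> (Suc n)) + ?\<phi>' (Suc n)) x"
      unfolding T sum[symmetric] by (simp add: szego_poly_Suc szego_rev_Suc verblunsky_def algebra_simps)
    finally show ?thesis .
  qed
  moreover have "poly (?\<phi> (Suc n) + ?\<phi>' (Suc n)) x = poly (smult (1 - chain_param (Suc n)) (Tpoly (Suc n))) x" for x
    by (simp add: T szego_poly_Suc szego_rev_Suc verblunsky_def algebra_simps)
  ultimately show ?case by (simp add: poly_eq_poly_eq_iff[symmetric] fun_eq_iff)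
qed

lemma Tpoly_eq_szego:
  "Tpoly n = smult (inverse (1 - chain_param n)) (szego_poly verblunsky n + szego_rev verblunsky n)"
  using Tpoly_szego_relations[of n] chain_param_less_1[of n] by simp

lemma degree_Tpoly: "degree (Tpoly n) = n"
proof (cases n)
  case (Suc m)
  have "degree (pCons 0 (szego_poly verblunsky m) + szego_rev verblunsky m) = Suc m"
    using degree_szego_rev_le[of verblunsky m] by (subst degree_add_eq_left) auto
  thus ?thesis using Tpoly_szego_relations[of m] Suc by simp
qed simp

end

theorem mainTheorem5:
  fixes \<rho> \<beta> \<tau> \<alpha> :: "nat \<Rightarrow> real"
  assumes rho_nz: "\<And>n. \<rho> n \<noteq> 0"
    and tau_nz: "\<And>n. \<tau> n \<noteq> 0"
    and ratio: "\<And>n. -2 < \<tau> n / \<rho> n \<and> \<tau> n / \<rho> n < 0"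
    and beta0: "\<beta> 0 \<noteq> 0" "\<beta> 0 \<noteq> 1" "\<beta> 0 \<noteq> -1"
    and beta_nz: "\<And>n. n \<ge> 1 \<Longrightarrow> \<beta> n \<noteq> 0"
    and tau1: "\<tau> 1 / \<rho> 1 = \<rho> 0 / \<beta> 0 * ((\<beta> 0)\<^sup>2 - 1)"
    and alpha_nz: "\<And>n. \<alpha> n \<noteq> 0"
    and alpha0: "\<alpha> 0 = \<tau> 0 / \<rho> 0"
    and alpha1: "\<alpha> 1 = \<rho> 0 * (\<beta> 0 - 1)"
    and alpha_rec: "\<And>n. n \<ge> 2 \<Longrightarrow>
          \<alpha> n = - (\<rho> (n - 1) - \<tau> (n - 1) / \<alpha> (n - 1)) + \<rho> (n - 1) * \<beta> (n - 1)"
    and extra1: "\<And>n. n \<ge> 2 \<Longrightarrow>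
          \<alpha> n * \<rho> n = (2 * \<rho> n + \<tau> n) * (\<rho> (n - 1) * \<alpha> (n - 1) - \<tau> (n - 1)) + \<tau> n"
    and extra2: "\<And>n. n \<ge> 2 \<Longrightarrow>
          \<alpha> n * \<rho> n = - \<rho> (n - 1) * \<beta> (n - 1) * (2 * \<rho> n + \<tau> n) * \<alpha> (n - 1)"
    and p_nz: "\<And>n. n \<ge> 1 \<Longrightarrow> \<alpha> n * \<rho> n - \<tau> n \<noteq> 0"
    and q_nz: "\<And>n. n \<ge> 1 \<Longrightarrow> \<alpha> (n - 1) * (\<alpha> n - \<rho> (n - 1) * \<beta> (n - 1)) \<noteq> 0"
  shows "para_orthogonal (\<lambda>n. map_poly complex_of_real (Rpoly \<rho> \<beta> \<tau> \<alpha> n))"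
proof -
  interpret three_term_para \<rho> \<beta> \<tau> \<alpha>
    by (rule three_term_para.intro)
      (fact rho_nz ratio beta0(1) tau1 alpha_nz alpha1 alpha_rec extra1 extra2 p_nz)+
  let ?\<Phi> = "\<lambda>n. map_poly complex_of_real (szego_poly verblunsky n)"
  obtain \<mu> where \<mu>: "nontrivial_circle_prob \<mu>" and OPUC: "monic_OPUC \<mu> ?\<Phi>"
    using szego_measure_exists[of verblunsky, OF verblunsky_bounded] by (elim exE conjE)
  have R: "map_poly complex_of_real (Rpoly \<rho> \<beta> \<tau> \<alpha> n)
      = smult (of_real (inverse (1 - chain_param n))) (?\<Phi> n + smult 1 (reversed_poly (?\<Phi> n)))" for n
    by (simp add: Rpoly_eq_Tpoly Tpoly_eq_szego szego_rev_eq_reflect reversed_poly_of_real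
        map_poly_of_real_smult map_poly_of_real_add)
  have c: "complex_of_real (inverse (1 - chain_param n)) \<noteq> 0" for n
    using chain_param_less_1[of n] by simp
  have deg: "degree (map_poly complex_of_real (Rpoly \<rho> \<beta> \<tau> \<alpha> n)) = n" for n
    by (simp add: Rpoly_eq_Tpoly degree_Tpoly)
  show ?thesis
    unfolding para_orthogonal_def
  proof (intro conjI allI impI exI[of _ \<mu>] exI[of _ ?\<Phi>])
    fix n :: nat
    show "\<exists>c \<omega>. c \<noteq> 0 \<and> cmod \<omega> = 1 \<and> map_poly complex_of_real (Rpoly \<rho> \<beta> \<tau> \<alpha> n)
        = smult c (?\<Phi> n + smult \<omega> (reversed_poly (?\<Phi> n)))"
      using R[of n] c[of n]
      by (intro exI[of _ "of_real (inverse (1 - chain_param n))"] exI[of _ 1]) simp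
  qed (use \<mu> OPUC deg in auto)
qed

end
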